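(* Let $d\geq1$, $n\geq1$, $u>d$ and $\vec v=(v_0,\dots,v_{d-1})$ with $u>v_0>\dots>v_{d-1}>0$. A $(\vec v,u)$-dimensional representation of $\mathcal{F}_{d,n}$ is $\vartheta^+$-semistable if and only if it is $\vartheta^+$-stable. Moreover, it is $\vartheta^+$-semistable if and only if the maps $e,A_1,\dots,A_{d-1}$ are all injective.
   Context: Set $V_i=\mathbb{C}^{v_i}$ ($i=0,\dots,d-1$), $U=\mathbb{C}^u$. A $(\vec v,u)$-dimensional representation of $\mathcal{F}_{d,n}$ is a tuple of linear maps $e\colon V_0\to U$, $A_p\colon V_p\to V_{p-1}$ ($p=1,\dots,d-1$), and, when $n\geq2$, $f_q\colon U\to V_0$ and $B_{pq}\colon V_{p-1}\to V_p$ ($p=1,\dots,d-1$, $q=1,\dots,n-1$), satisfying for $n\geq2$ and every $q$: if $d=1$, $f_qe=0$; if $d\geq2$, $A_1B_{1q}+f_qe=0$ on $V_0$, $A_{p+1}B_{p+1,q}=B_{pq}A_p$ on $V_p$ for $1\leq p\leq d-2$, and $B_{d-1,q}A_{d-1}=0$ on $V_{d-1}$. (For $n=1$ there are no $f_q,B_{pq}$ and no relations.) Stability: fix a basis $\varepsilon_1,\dots,\varepsilon_u$ of $U$, coordinate maps $\varphi_l\colon U\to\mathbb{C}$ and $\psi_l\colon\mathbb{C}\to U$, $\psi_l(1)=\varepsilon_l$. Associate the representation on $V\oplus\mathbb{C}$ (extra vertex $\infty$ with $V_\infty=\mathbb{C}$) with maps $\tilde e_l=\varphi_l\circ e\colon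 V_0\to\mathbb{C}$, $\tilde f_{ql}=f_q\circ\psi_l\colon\mathbb{C}\to V_0$, and the $A_p,B_{pq}$. A subrepresentation is a collection of subspaces $S_i\subset V_i$, $S_\infty\subset\mathbb{C}$ preserved by all these maps; put $s_i=\dim S_i$. With $\vartheta^+=(1,\dots,1)\in\mathbb{R}^d$, the representation is $\vartheta^+$-semistable (resp. stable) if every proper nontrivial subrepresentation satisfies $\sum_i s_i\leq(\sum_i v_i)s_\infty$ (resp. strict inequality). *)

theory Defs
  imports "Jordan_Normal_Form.VS_Connect"
begin

text \<open>Vectors of C^k are elements of carrier_vec k (type complex vec); linear maps
  C^a \<rightarrow> C^b are matrices in carrier_mat b a acting by mult_mat_vec.\<close>

definition cspace :: "nat \<Rightarrow> (complex, complex vec) module" where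
  "cspace k = module_vec TYPE(complex) k"

definition is_subspace :: "nat \<Rightarrow> complex vec set \<Rightarrow> bool" where
  "is_subspace k S \<longleftrightarrow> VectorSpace.subspace class_ring S (cspace k)"

definition sdim :: "nat \<Rightarrow> complex vec set \<Rightarrow> nat" where
  "sdim k S = vectorspace.dim class_ring ((cspace k)\<lparr>carrier := S\<rparr>)"

definition is_rep_F ::
  "nat \<Rightarrow> nat \<Rightarrow> (nat \<Rightarrow> nat) \<Rightarrow> nat \<Rightarrow> complex mat \<Rightarrow> (nat \<Rightarrow> complex mat)
    \<Rightarrow> (nat \<Rightarrow> complex mat) \<Rightarrow> (nat \<Rightarrow> nat \<Rightarrow> complex mat) \<Rightarrow> bool" where
  "is_rep_F d n v u e A f B \<longleftrightarrow>
     e \<in> carrier_mat u (v 0) \<and>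
     (\<forall>p\<in>{1..d-1}. A p \<in> carrier_mat (v (p-1)) (v p)) \<and>
     (\<forall>q\<in>{1..n-1}. f q \<in> carrier_mat (v 0) u) \<and>
     (\<forall>p\<in>{1..d-1}. \<forall>q\<in>{1..n-1}. B p q \<in> carrier_mat (v p) (v (p-1))) \<and>
     (\<forall>q\<in>{1..n-1}.
        (d = 1 \<longrightarrow> f q * e = 0\<^sub>m (v 0) (v 0)) \<and>
        (d \<ge> 2 \<longrightarrow>
           A 1 * B 1 q + f q * e = 0\<^sub>m (v 0) (v 0) \<and>
           (\<forall>p\<in>{1..d-2}. A (p+1) * B (p+1) q = B p q * A p) \<and>
           B (d-1) q * A (d-1) = 0\<^sub>m (v (d-1)) (v (d-1))))"

text \<open>Maps of the associated representation on V \<oplus> C (vertex \<infinity>, V_\<infinity> = C = C^1):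
  etilde l = \<phi>_l \<circ> e : V_0 \<rightarrow> C, ftilde q l = f_q \<circ> \<psi>_l : C \<rightarrow> V_0.\<close>
definition etilde :: "nat \<Rightarrow> complex mat \<Rightarrow> nat \<Rightarrow> complex mat" where
  "etilde v0 e l = mat_of_rows v0 [row e l]"

definition ftilde :: "nat \<Rightarrow> (nat \<Rightarrow> complex mat) \<Rightarrow> nat \<Rightarrow> nat \<Rightarrow> complex mat" where
  "ftilde v0 f q l = mat_of_cols v0 [col (f q) l]"

definition is_subrep ::
  "nat \<Rightarrow> nat \<Rightarrow> (nat \<Rightarrow> nat) \<Rightarrow> nat \<Rightarrow> complex mat \<Rightarrow> (nat \<Rightarrow> complex mat)
    \<Rightarrow> (nat \<Rightarrow> complex mat) \<Rightarrow> (nat \<Rightarrow> nat \<Rightarrow> complex mat)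
    \<Rightarrow> (nat \<Rightarrow> complex vec set) \<Rightarrow> complex vec set \<Rightarrow> bool" where
  "is_subrep d n v u e A f B S Sinf \<longleftrightarrow>
     (\<forall>i<d. is_subspace (v i) (S i)) \<and> is_subspace 1 Sinf \<and>
     (\<forall>l<u. \<forall>x\<in>S 0. etilde (v 0) e l *\<^sub>v x \<in> Sinf) \<and>
     (\<forall>q\<in>{1..n-1}. \<forall>l<u. \<forall>y\<in>Sinf. ftilde (v 0) f q l *\<^sub>v y \<in> S 0) \<and>
     (\<forall>p\<in>{1..d-1}. \<forall>x\<in>S p. A p *\<^sub>v x \<in> S (p-1)) \<and>
     (\<forall>p\<in>{1..d-1}. \<forall>q\<in>{1..n-1}. \<forall>x\<in>S (p-1). B p q *\<^sub>v x \<in> S p)"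

definition proper_nontrivial ::
  "nat \<Rightarrow> (nat \<Rightarrow> nat) \<Rightarrow> (nat \<Rightarrow> complex vec set) \<Rightarrow> complex vec set \<Rightarrow> bool" where
  "proper_nontrivial d v S Sinf \<longleftrightarrow>
     \<not> ((\<forall>i<d. S i = {0\<^sub>v (v i)}) \<and> Sinf = {0\<^sub>v 1}) \<and>
     \<not> ((\<forall>i<d. S i = carrier_vec (v i)) \<and> Sinf = carrier_vec 1)"

definition theta_semistable where
  "theta_semistable d n v u e A f B \<longleftrightarrow>
     (\<forall>S Sinf. is_subrep d n v u e A f B S Sinf \<and> proper_nontrivial d v S Sinf \<longrightarrow>
        (\<Sum>i<d. sdim (v i) (S i)) \<le> (\<Sum>i<d. v i) * sdim 1 Sinf)"

definition theta_stable where
  "theta_stable d n v u e A f B \<longleftrightarrow>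
     (\<forall>S Sinf. is_subrep d n v u e A f B S Sinf \<and> proper_nontrivial d v S Sinf \<longrightarrow>
        (\<Sum>i<d. sdim (v i) (S i)) < (\<Sum>i<d. v i) * sdim 1 Sinf)"

end

theory Submission
  imports Defs "Jordan_Normal_Form.Matrix_Kernel"
begin

text \<open>
  The kernels \<open>K\<^sub>i\<close> of the composites \<open>e A\<^sub>1 \<cdots> A\<^sub>i : V\<^sub>i \<rightarrow> U\<close>, together with \<open>0\<close> at the
  vertex \<open>\<infinity>\<close>, form a subrepresentation: the \<open>A\<^sub>p\<close> map \<open>K\<^sub>p\<close> into \<open>K\<^sub>p\<^sub>-\<^sub>1\<close>, and the relations
  give \<open>e A\<^sub>1 \<cdots> A\<^sub>p B\<^sub>p\<^sub>q = - e f\<^sub>q e A\<^sub>1 \<cdots> A\<^sub>p\<^sub>-\<^sub>1\<close>, so the \<open>B\<^sub>p\<^sub>q\<close> map \<open>K\<^sub>p\<^sub>-\<^sub>1\<close> into \<open>K\<^sub>p\<close>.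
  Since \<open>s\<^sub>\<infinity> = 0\<close> for it, semistability forces all \<open>K\<^sub>i = 0\<close>, i.e. \<open>e\<close> and all \<open>A\<^sub>p\<close> are
  injective. Conversely, if they are injective, every subrepresentation with \<open>S\<^sub>\<infinity> = 0\<close>
  lies in the \<open>K\<^sub>i = 0\<close> and is trivial, while one with \<open>S\<^sub>\<infinity> = \<complex>\<close> is proper only if some
  \<open>S\<^sub>j \<noteq> V\<^sub>j\<close>, whence \<open>\<Sum> s\<^sub>i < \<Sum> v\<^sub>i\<close>. So injectivity gives stability, which implies
  semistability.
\<close>

lemma (in vectorspace) subspace_has_basis:
  assumes "fin_dim" and "subspace K X V"
  obtains b where "finite b" "b \<subseteq> X" "lin_indpt b" "span b = X" "vectorspace.dim K (vs X) = card b"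
proof -
  interpret W: vectorspace K "vs X" using subspace_is_vs[OF assms(2)] .
  have XV: "X \<subseteq> carrier V" and sm: "submodule K X V"
    using assms(2) unfolding subspace_def submodule_def by auto
  let ?P = "\<lambda>S. S \<subseteq> carrier (vs X) \<and> W.lin_indpt S"
  have bounded: "finite S \<and> card S \<le> dim" if "?P S" for S
  proof -
    have "S \<subseteq> X" "lin_indpt S" using that span_li_not_depend(2)[OF _ sm] by auto
    then show ?thesis using li_le_dim[OF assms(1)] XV by blast
  qed
  have "?P {}" unfolding W.lin_dep_def by auto
  then obtain b where b: "finite b" "maximal b ?P" using maximal_exists[of ?P, OF bounded] by blast
  then have basis: "W.basis b" using W.max_li_is_basis by blast
  then have "b \<subseteq> X" "W.lin_indpt b" "W.gen_set b" unfolding W.basis_def by auto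
  with sm have "lin_indpt b" "span b = X"
    using span_li_not_depend[OF _ sm] by auto
  with b(1) \<open>b \<subseteq> X\<close> W.dim_basis[OF b(1) basis] that show ?thesis by blast
qed

lemma is_subspace_subset_carrier: "is_subspace k S \<Longrightarrow> S \<subseteq> carrier_vec k"
  and is_subspace_zero_mem: "is_subspace k S \<Longrightarrow> 0\<^sub>v k \<in> S"
  unfolding is_subspace_def cspace_def subspace_def submodule_def by (auto simp: module_vec_simps)

lemma is_subspace_mat_kernel:
  assumes "M \<in> carrier_mat m k"
  shows "is_subspace k (mat_kernel (M :: complex mat))"
proof -
  interpret vec_space "TYPE(complex)" k .
  have "submodule class_ring (mat_kernel M) V"
    by (rule submodule.intro)
      (use vec_module assms in \<open>auto simp: module_vec_simps mat_kernel mult_add_distrib_mat_vec mult_mat_vec\<close>)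
  then show ?thesis unfolding is_subspace_def cspace_def subspace_def using vec_vs by simp
qed

lemma is_subspace_zero: "is_subspace k {0\<^sub>v k}"
proof -
  have "mat_kernel (1\<^sub>m k) = {0\<^sub>v k :: complex vec}" by (auto simp: mat_kernel_def)
  then show ?thesis using is_subspace_mat_kernel[of "1\<^sub>m k" k k] by simp
qed

lemma
  assumes "is_subspace k S"
  shows sdim_le_dim: "sdim k S \<le> k"
    and sdim_eq_dim_iff: "sdim k S = k \<longleftrightarrow> S = carrier_vec k"
    and sdim_eq_0_iff: "sdim k S = 0 \<longleftrightarrow> S = {0\<^sub>v k}"
proof -
  interpret vec_space "TYPE(complex)" k .
  have S: "subspace class_ring S V" using assms unfolding is_subspace_def cspace_def by simp
  obtain b where b: "finite b" "b \<subseteq> S" "lin_indpt b" "span b = S" and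
    card: "sdim k S = card b"
    using subspace_has_basis[OF fin_dim S] unfolding sdim_def cspace_def by metis
  have SV: "S \<subseteq> carrier_vec k" using is_subspace_subset_carrier[OF assms] .
  show le: "sdim k S \<le> k" using li_le_dim[OF fin_dim] b SV dim_is_n card by auto
  show "sdim k S = k \<longleftrightarrow> S = carrier_vec k"
  proof
    assume "sdim k S = k"
    then have "basis b" using dim_li_is_basis[OF fin_dim b(1) _ b(3)] b(2) SV card dim_is_n by auto
    then show "S = carrier_vec k" using b(4) unfolding basis_def by simp
  next
    assume "S = carrier_vec k"
    then have "basis b" using b unfolding basis_def by auto
    then show "sdim k S = k" using dim_basis[OF b(1)] dim_is_n card by simp
  qed
  show "sdim k S = 0 \<longleftrightarrow> S = {0\<^sub>v k}"
  proof
    assume "sdim k S = 0"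
    then show "S = {0\<^sub>v k}" using b(1,4) card span_empty by simp
  next
    assume "S = {0\<^sub>v k}"
    moreover have "0\<^sub>v k \<notin> b" using vs_zero_lin_dep b(2,3) SV by auto
    ultimately have "b = {}" using b(2) by auto
    then show "sdim k S = 0" using card by simp
  qed
qed

lemma zero_vec_set_ne_carrier_vec:
  assumes "0 < k"
  shows "{0\<^sub>v k :: 'a :: zero_neq_one vec} \<noteq> carrier_vec k"
proof
  assume "{0\<^sub>v k} = (carrier_vec k :: 'a vec set)"
  moreover have "unit_vec k 0 \<in> (carrier_vec k :: 'a vec set)" by simp
  ultimately have "unit_vec k 0 = (0\<^sub>v k :: 'a vec)" by blast
  then have "unit_vec k 0 $ 0 = (0\<^sub>v k :: 'a vec) $ 0" by simp
  with assms show False by simp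
qed

lemma subspace_of_line_cases:
  assumes "is_subspace 1 S"
  shows "S = {0\<^sub>v 1} \<and> sdim 1 S = 0 \<or> S = carrier_vec 1 \<and> sdim 1 S = 1"
  using sdim_le_dim[OF assms] sdim_eq_dim_iff[OF assms] sdim_eq_0_iff[OF assms] by linarith

lemma mult_mat_vec_zero_vec [simp]:
  "A \<in> carrier_mat m k \<Longrightarrow> A *\<^sub>v 0\<^sub>v k = (0\<^sub>v m :: 'a :: semiring_0 vec)"
  by (auto simp: scalar_prod_def)

lemma inj_on_mult_mat_vec_iff:
  assumes "M \<in> carrier_mat m k"
  shows "inj_on (\<lambda>x. M *\<^sub>v x) (carrier_vec k) \<longleftrightarrow> mat_kernel M = {0\<^sub>v k :: 'a :: comm_ring_1 vec}"
proof
  assume inj: "inj_on (\<lambda>x. M *\<^sub>v x) (carrier_vec k)"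
  have "x = 0\<^sub>v k" if "x \<in> mat_kernel M" for x
  proof -
    have x: "x \<in> carrier_vec k" "M *\<^sub>v x = M *\<^sub>v 0\<^sub>v k"
      using mat_kernelD[OF assms that] assms by auto
    show ?thesis using inj_onD[OF inj x(2) x(1) zero_carrier_vec] .
  qed
  moreover have "0\<^sub>v k \<in> mat_kernel M" using assms by (intro mat_kernelI) auto
  ultimately show "mat_kernel M = {0\<^sub>v k}" by blast
next
  assume ker: "mat_kernel M = {0\<^sub>v k}"
  show "inj_on (\<lambda>x. M *\<^sub>v x) (carrier_vec k)"
  proof (rule inj_onI)
    fix x y :: "'a vec"
    assume x: "x \<in> carrier_vec k" and y: "y \<in> carrier_vec k" and eq: "M *\<^sub>v x = M *\<^sub>v y"
    have "M *\<^sub>v (x - y) = 0\<^sub>v m"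
      using assms x y eq by (simp add: mult_minus_distrib_mat_vec)
    then have "x - y \<in> mat_kernel M" using assms x y by (intro mat_kernelI) auto
    then have "x - y = 0\<^sub>v k" using ker by blast
    show "x = y"
    proof (rule eq_vecI)
      fix i assume "i < dim_vec y"
      then have "(x - y) $ i = 0" using \<open>x - y = 0\<^sub>v k\<close> y by simp
      then show "x $ i = y $ i" using \<open>i < dim_vec y\<close> x y by simp
    qed (use x y in simp)
  qed
qed

lemma mat_kernel_mult_trivial:
  assumes A: "A \<in> carrier_mat m k" and B: "B \<in> carrier_mat l m"
    and "mat_kernel A = {0\<^sub>v k}" and "mat_kernel B = {0\<^sub>v m}"
  shows "mat_kernel (B * A) = {0\<^sub>v k :: 'a :: comm_ring_1 vec}"
proof -
  have "x = 0\<^sub>v k" if x: "x \<in> carrier_vec k" "B *\<^sub>v (A *\<^sub>v x) = 0\<^sub>v l" for x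
  proof -
    have "A *\<^sub>v x \<in> mat_kernel B" using x A B by (intro mat_kernelI) auto
    then have "A *\<^sub>v x = 0\<^sub>v m" using assms(4) by blast
    then have "x \<in> mat_kernel A" using x A by (intro mat_kernelI) auto
    then show ?thesis using assms(3) by blast
  qed
  moreover have "0\<^sub>v k \<in> mat_kernel (B * A)" using A B by (intro mat_kernelI) auto
  moreover have "x \<in> carrier_vec k" "B *\<^sub>v (A *\<^sub>v x) = 0\<^sub>v l" if "x \<in> mat_kernel (B * A)" for x
    using mat_kernelD[OF mult_carrier_mat[OF B A] that] A B by auto
  ultimately show ?thesis by blast
qed

fun path_mat :: "'a :: semiring_0 mat \<Rightarrow> (nat \<Rightarrow> 'a mat) \<Rightarrow> nat \<Rightarrow> 'a mat" where
  "path_mat e A 0 = e"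
| "path_mat e A (Suc i) = path_mat e A i * A (Suc i)"

lemma path_mat_carrier:
  assumes "e \<in> carrier_mat u (v 0)" and "\<And>p. p \<in> {1..j} \<Longrightarrow> A p \<in> carrier_mat (v (p - 1)) (v p)"
    and "i \<le> j"
  shows "path_mat e A i \<in> carrier_mat u (v i)"
  using assms(3)
proof (induction i)
  case (Suc i)
  have "A (Suc i) \<in> carrier_mat (v (Suc i - 1)) (v (Suc i))"
    using assms(2)[of "Suc i"] Suc.prems by simp
  then show ?case using Suc by auto
qed (use assms(1) in simp)

lemma path_mat_Suc_mult_B:
  assumes e: "e \<in> carrier_mat u (v 0)" and f: "f \<in> carrier_mat (v 0) u"
    and A: "\<And>p. p \<in> {1..Suc i} \<Longrightarrow> A p \<in> carrier_mat (v (p - 1)) (v p)"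
    and B: "\<And>p. p \<in> {1..Suc i} \<Longrightarrow> B p \<in> carrier_mat (v p) (v (p - 1))"
    and AB_first: "A 1 * B 1 + f * e = 0\<^sub>m (v 0) (v 0)"
    and AB_comm: "\<And>p. p \<in> {1..i} \<Longrightarrow> A (p + 1) * B (p + 1) = B p * A p"
  shows "path_mat e A (Suc i) * B (Suc i) = - (e * f * path_mat e A i :: 'a :: comm_ring_1 mat)"
  using A B AB_comm
proof (induction i)
  case 0
  have A1: "A 1 \<in> carrier_mat (v 0) (v 1)" and B1: "B 1 \<in> carrier_mat (v 1) (v 0)"
    using "0.prems"(1)[of 1] "0.prems"(2)[of 1] by auto
  have "A 1 * B 1 = - (f * e)"
  proof (rule eq_matI)
    fix i j assume ij: "i < dim_row (- (f * e))" "j < dim_col (- (f * e))"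
    have "(A 1 * B 1 + f * e) $$ (i, j) = 0" using AB_first ij f e by simp
    then show "(A 1 * B 1) $$ (i, j) = (- (f * e)) $$ (i, j)" using ij A1 B1 f e by (simp add: eq_neg_iff_add_eq_0)
  qed (use A1 B1 f e in auto)
  then have "e * A 1 * B 1 = - (e * f * e)"
    using A1 B1 f e by (simp add: assoc_mult_mat[OF e A1 B1])
  then show ?case by simp
next
  case (Suc i)
  let ?P = "path_mat e A (Suc i)"
  have A1: "A (Suc i) \<in> carrier_mat (v i) (v (Suc i))" and B1: "B (Suc i) \<in> carrier_mat (v (Suc i)) (v i)"
    and A2: "A (Suc (Suc i)) \<in> carrier_mat (v (Suc i)) (v (Suc (Suc i)))"
    and B2: "B (Suc (Suc i)) \<in> carrier_mat (v (Suc (Suc i))) (v (Suc i))"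
    using Suc.prems(1)[of "Suc i"] Suc.prems(2)[of "Suc i"]
      Suc.prems(1)[of "Suc (Suc i)"] Suc.prems(2)[of "Suc (Suc i)"] by auto
  have P': "path_mat e A i \<in> carrier_mat u (v i)"
    using path_mat_carrier[where v = v and i = i and j = "Suc (Suc i)", OF e Suc.prems(1)] by simp
  then have P: "?P \<in> carrier_mat u (v (Suc i))" using A1 by simp
  have IH: "?P * B (Suc i) = - (e * f * path_mat e A i)"
    using Suc.IH Suc.prems by auto
  have "path_mat e A (Suc (Suc i)) * B (Suc (Suc i)) = ?P * (A (Suc (Suc i)) * B (Suc (Suc i)))"
    using assoc_mult_mat[OF P A2 B2] by simp
  also have "\<dots> = ?P * (B (Suc i) * A (Suc i))" using Suc.prems(3)[of "Suc i"] by simp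
  also have "\<dots> = (?P * B (Suc i)) * A (Suc i)" using assoc_mult_mat[OF P B1 A1] by simp
  also have "\<dots> = - (e * f * path_mat e A i * A (Suc i))"
    using IH uminus_mult_left_mat[of "e * f * path_mat e A i" "A (Suc i)"] e f P' A1 by simp
  also have "\<dots> = - (e * f * ?P)"
    using assoc_mult_mat[OF mult_carrier_mat[OF e f] P' A1] by simp
  finally show ?case .
qed

lemma etilde_mult_vec:
  assumes "e \<in> carrier_mat u v0" and "l < u" and "x \<in> carrier_vec v0"
  shows "etilde v0 e l *\<^sub>v x = vec 1 (\<lambda>_. (e *\<^sub>v x) $ l)"
  using assms unfolding etilde_def by (auto intro!: eq_vecI)

lemma etilde_mult_vec_zero_iff:
  assumes e: "e \<in> carrier_mat u v0" and x: "x \<in> carrier_vec v0"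
  shows "(\<forall>l<u. etilde v0 e l *\<^sub>v x = 0\<^sub>v 1) \<longleftrightarrow> e *\<^sub>v x = 0\<^sub>v u"
proof
  assume zero: "\<forall>l<u. etilde v0 e l *\<^sub>v x = 0\<^sub>v 1"
  show "e *\<^sub>v x = 0\<^sub>v u"
  proof (rule eq_vecI)
    fix l assume "l < dim_vec (0\<^sub>v u :: complex vec)"
    then have l: "l < u" by simp
    then have "vec 1 (\<lambda>_. (e *\<^sub>v x) $ l) $ 0 = (0\<^sub>v 1 :: complex vec) $ 0"
      using zero etilde_mult_vec[OF e l x] by simp
    then show "(e *\<^sub>v x) $ l = 0\<^sub>v u $ l" using l by simp
  qed (use e in simp)
next
  assume "e *\<^sub>v x = 0\<^sub>v u"
  then show "\<forall>l<u. etilde v0 e l *\<^sub>v x = 0\<^sub>v 1"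
    using etilde_mult_vec[OF e _ x] by (auto intro!: eq_vecI)
qed

lemma ftilde_carrier: "ftilde v0 f q l \<in> carrier_mat v0 1"
  unfolding ftilde_def by auto

locale rep_F =
  fixes d n :: nat and v :: "nat \<Rightarrow> nat" and u :: nat and e :: "complex mat"
    and A f :: "nat \<Rightarrow> complex mat" and B :: "nat \<Rightarrow> nat \<Rightarrow> complex mat"
  assumes rep: "is_rep_F d n v u e A f B"
begin

lemma e_carrier: "e \<in> carrier_mat u (v 0)"
  and A_carrier: "p \<in> {1..d-1} \<Longrightarrow> A p \<in> carrier_mat (v (p - 1)) (v p)"
  and f_carrier: "q \<in> {1..n-1} \<Longrightarrow> f q \<in> carrier_mat (v 0) u"
  and B_carrier: "p \<in> {1..d-1} \<Longrightarrow> q \<in> {1..n-1} \<Longrightarrow> B p q \<in> carrier_mat (v p) (v (p - 1))"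
  using rep unfolding is_rep_F_def by auto

lemma AB_first: "q \<in> {1..n-1} \<Longrightarrow> 2 \<le> d \<Longrightarrow> A 1 * B 1 q + f q * e = 0\<^sub>m (v 0) (v 0)"
  and AB_comm: "q \<in> {1..n-1} \<Longrightarrow> p \<in> {1..d-2} \<Longrightarrow> A (p + 1) * B (p + 1) q = B p q * A p"
  using rep unfolding is_rep_F_def by auto

lemma path_carrier: "i < d \<Longrightarrow> path_mat e A i \<in> carrier_mat u (v i)"
  using path_mat_carrier[where j = "d - 1", OF e_carrier A_carrier] by simp

lemma path_mult_B:
  assumes p: "p \<in> {1..d-1}" and q: "q \<in> {1..n-1}"
  shows "path_mat e A p * B p q = - (e * f q * path_mat e A (p - 1))"
proof -
  obtain i where i: "p = Suc i" using p by (cases p) auto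
  have "path_mat e A (Suc i) * B (Suc i) q = - (e * f q * path_mat e A i)"
    by (rule path_mat_Suc_mult_B[where v = v, OF e_carrier f_carrier[OF q]])
      (use A_carrier B_carrier[OF _ q] AB_first[OF q] AB_comm[OF q] p i in auto)
  then show ?thesis using i by simp
qed

definition path_kernel :: "nat \<Rightarrow> complex vec set" where
  "path_kernel i = mat_kernel (path_mat e A i)"

lemma path_kernel_is_subrep: "is_subrep d n v u e A f B path_kernel {0\<^sub>v 1}"
  unfolding is_subrep_def
proof (intro conjI ballI allI impI)
  show "is_subspace (v i) (path_kernel i)" if "i < d" for i
    unfolding path_kernel_def using is_subspace_mat_kernel[OF path_carrier[OF that]] .
  show "is_subspace 1 {0\<^sub>v 1}" by (rule is_subspace_zero)
next
  fix l x assume "l < u" and "x \<in> path_kernel 0"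
  then show "etilde (v 0) e l *\<^sub>v x \<in> {0\<^sub>v 1}"
    using etilde_mult_vec_zero_iff[OF e_carrier] mat_kernelD[OF e_carrier]
    unfolding path_kernel_def by auto
next
  fix q l y assume "y \<in> {0\<^sub>v 1 :: complex vec}"
  then have "ftilde (v 0) f q l *\<^sub>v y = 0\<^sub>v (v 0)"
    using mult_mat_vec_zero_vec[OF ftilde_carrier] by simp
  then show "ftilde (v 0) f q l *\<^sub>v y \<in> path_kernel 0"
    using e_carrier unfolding path_kernel_def by (auto intro: mat_kernelI)
next
  fix p x assume p: "p \<in> {1..d-1}" and x: "x \<in> path_kernel p"
  have P: "path_mat e A (p - 1) \<in> carrier_mat u (v (p - 1))" using path_carrier p by auto
  have x': "x \<in> carrier_vec (v p)" "path_mat e A p *\<^sub>v x = 0\<^sub>v u"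
    using mat_kernelD[OF path_carrier x[unfolded path_kernel_def]] p by auto
  have "path_mat e A p = path_mat e A (p - 1) * A p" using p by (cases p) auto
  then have "path_mat e A (p - 1) *\<^sub>v (A p *\<^sub>v x) = 0\<^sub>v u"
    using x' A_carrier[OF p] P by simp
  then show "A p *\<^sub>v x \<in> path_kernel (p - 1)"
    unfolding path_kernel_def using P A_carrier[OF p] x' by (auto intro: mat_kernelI)
next
  fix p q x assume p: "p \<in> {1..d-1}" and q: "q \<in> {1..n-1}" and x: "x \<in> path_kernel (p - 1)"
  have P: "path_mat e A (p - 1) \<in> carrier_mat u (v (p - 1))"
    and P': "path_mat e A p \<in> carrier_mat u (v p)" using path_carrier p by auto
  have x': "x \<in> carrier_vec (v (p - 1))" "path_mat e A (p - 1) *\<^sub>v x = 0\<^sub>v u"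
    using mat_kernelD[OF P x[unfolded path_kernel_def]] by auto
  have "path_mat e A p *\<^sub>v (B p q *\<^sub>v x) = (path_mat e A p * B p q) *\<^sub>v x"
    using P' B_carrier[OF p q] x' by simp
  also have "\<dots> = - (e *\<^sub>v (f q *\<^sub>v (path_mat e A (p - 1) *\<^sub>v x)))"
    using path_mult_B[OF p q] e_carrier f_carrier[OF q] P x'
      assoc_mult_mat_vec[OF e_carrier mult_carrier_mat[OF f_carrier[OF q] P] x'(1)]
      assoc_mult_mat_vec[OF f_carrier[OF q] P x'(1)]
    by simp
  also have "\<dots> = 0\<^sub>v u" using x' e_carrier f_carrier[OF q] by simp
  finally show "B p q *\<^sub>v x \<in> path_kernel p"
    unfolding path_kernel_def using P' B_carrier[OF p q] x' by (auto intro: mat_kernelI)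
qed


lemma subrep_subset_path_kernel:
  assumes sub: "is_subrep d n v u e A f B S {0\<^sub>v 1}"
  shows "i < d \<Longrightarrow> S i \<subseteq> path_kernel i"
proof (induction i)
  case 0
  show ?case
  proof
    fix x assume x: "x \<in> S 0"
    have "x \<in> carrier_vec (v 0)"
      using x is_subspace_subset_carrier sub "0" unfolding is_subrep_def by blast
    moreover have "\<forall>l<u. etilde (v 0) e l *\<^sub>v x = 0\<^sub>v 1"
      using sub x unfolding is_subrep_def by blast
    ultimately show "x \<in> path_kernel 0"
      using etilde_mult_vec_zero_iff[OF e_carrier] e_carrier
      unfolding path_kernel_def by (auto intro: mat_kernelI)
  qed
next
  case (Suc i)
  have p: "Suc i \<in> {1..d-1}" using Suc.prems by auto
  show ?case
  proof
    fix x assume x: "x \<in> S (Suc i)"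
    have xc: "x \<in> carrier_vec (v (Suc i))"
      using x is_subspace_subset_carrier sub Suc.prems unfolding is_subrep_def by blast
    have "A (Suc i) *\<^sub>v x \<in> S i" using sub p x unfolding is_subrep_def by fastforce
    then have "path_mat e A i *\<^sub>v (A (Suc i) *\<^sub>v x) = 0\<^sub>v u"
      using Suc mat_kernelD(2)[OF path_carrier] unfolding path_kernel_def by auto
    then show "x \<in> path_kernel (Suc i)"
      using xc A_carrier[OF p] path_carrier[of i] Suc.prems
      unfolding path_kernel_def by (auto intro: mat_kernelI)
  qed
qed

lemma injective_iff_path_kernel_trivial:
  assumes "0 < d"
  shows "(inj_on (\<lambda>x. e *\<^sub>v x) (carrier_vec (v 0)) \<and>
           (\<forall>p\<in>{1..d-1}. inj_on (\<lambda>x. A p *\<^sub>v x) (carrier_vec (v p))))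
     \<longleftrightarrow> (\<forall>i<d. path_kernel i = {0\<^sub>v (v i)})"
proof
  assume inj: "inj_on (\<lambda>x. e *\<^sub>v x) (carrier_vec (v 0)) \<and>
    (\<forall>p\<in>{1..d-1}. inj_on (\<lambda>x. A p *\<^sub>v x) (carrier_vec (v p)))"
  show "\<forall>i<d. path_kernel i = {0\<^sub>v (v i)}"
  proof (intro allI impI)
    fix i assume "i < d"
    then show "path_kernel i = {0\<^sub>v (v i)}"
    proof (induction i)
      case 0
      then show ?case
        using inj inj_on_mult_mat_vec_iff[OF e_carrier] unfolding path_kernel_def by simp
    next
      case (Suc i)
      have p: "Suc i \<in> {1..d-1}" using Suc.prems by auto
      have "mat_kernel (A (Suc i)) = {0\<^sub>v (v (Suc i))}"
        using inj p inj_on_mult_mat_vec_iff[OF A_carrier[OF p]] by auto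
      then show ?case
        using Suc mat_kernel_mult_trivial[OF _ path_carrier] A_carrier[OF p]
        unfolding path_kernel_def by simp
    qed
  qed
next
  assume ker: "\<forall>i<d. path_kernel i = {0\<^sub>v (v i)}"
  have "mat_kernel (A p) = {0\<^sub>v (v p)}" if p: "p \<in> {1..d-1}" for p
  proof -
    have "path_mat e A p = path_mat e A (p - 1) * A p" using p by (cases p) auto
    moreover have "p - 1 < d" using p by auto
    ultimately have "mat_kernel (A p) \<subseteq> path_kernel p"
      using mat_kernel_mult_subset[OF A_carrier[OF p] path_carrier[of "p - 1"]]
      unfolding path_kernel_def by auto
    moreover have "0\<^sub>v (v p) \<in> mat_kernel (A p)" using A_carrier[OF p] by (auto intro: mat_kernelI)
    ultimately show ?thesis using ker p by auto
  qed
  moreover have "mat_kernel e = {0\<^sub>v (v 0)}" using ker assms unfolding path_kernel_def by auto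
  ultimately show "inj_on (\<lambda>x. e *\<^sub>v x) (carrier_vec (v 0)) \<and>
    (\<forall>p\<in>{1..d-1}. inj_on (\<lambda>x. A p *\<^sub>v x) (carrier_vec (v p)))"
    using inj_on_mult_mat_vec_iff[OF e_carrier] inj_on_mult_mat_vec_iff[OF A_carrier] by simp
qed


lemma semistable_imp_path_kernel_trivial:
  assumes ss: "theta_semistable d n v u e A f B" and i: "i < d"
  shows "path_kernel i = {0\<^sub>v (v i)}"
proof (rule ccontr)
  assume nonzero: "path_kernel i \<noteq> {0\<^sub>v (v i)}"
  have sub: "is_subspace (v j) (path_kernel j)" if "j < d" for j
    using path_kernel_is_subrep that unfolding is_subrep_def by blast
  have "proper_nontrivial d v path_kernel {0\<^sub>v 1}"
    using nonzero i zero_vec_set_ne_carrier_vec[of 1] unfolding proper_nontrivial_def by auto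
  then have "(\<Sum>j<d. sdim (v j) (path_kernel j)) \<le> (\<Sum>j<d. v j) * sdim 1 {0\<^sub>v 1}"
    using ss path_kernel_is_subrep unfolding theta_semistable_def by blast
  also have "\<dots> = 0" using sdim_eq_0_iff[OF is_subspace_zero] by simp
  finally have "sdim (v i) (path_kernel i) = 0" using i by simp
  then show False using nonzero sdim_eq_0_iff[OF sub[OF i]] by blast
qed

lemma path_kernel_trivial_imp_stable:
  assumes ker: "\<forall>i<d. path_kernel i = {0\<^sub>v (v i)}"
  shows "theta_stable d n v u e A f B"
  unfolding theta_stable_def
proof (intro allI impI, elim conjE)
  fix S Sinf
  assume sub: "is_subrep d n v u e A f B S Sinf" and proper: "proper_nontrivial d v S Sinf"
  have S: "is_subspace (v i) (S i)" if "i < d" for i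
    using sub that unfolding is_subrep_def by blast
  have "is_subspace 1 Sinf" using sub unfolding is_subrep_def by blast
  then consider "Sinf = {0\<^sub>v 1}" | "Sinf = carrier_vec 1" "sdim 1 Sinf = 1"
    using subspace_of_line_cases by blast
  then show "(\<Sum>i<d. sdim (v i) (S i)) < (\<Sum>i<d. v i) * sdim 1 Sinf"
  proof cases
    case 1
    have "S i = {0\<^sub>v (v i)}" if "i < d" for i
      using subrep_subset_path_kernel[OF sub[unfolded 1] that] ker is_subspace_zero_mem[OF S] that
      by blast
    then show ?thesis using proper 1 unfolding proper_nontrivial_def by blast
  next
    case 2
    then obtain j where j: "j < d" "S j \<noteq> carrier_vec (v j)"
      using proper unfolding proper_nontrivial_def by auto
    have "(\<Sum>i<d. sdim (v i) (S i)) < (\<Sum>i<d. v i)"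
    proof (rule sum_strict_mono_ex1)
      show "\<forall>i\<in>{..<d}. sdim (v i) (S i) \<le> v i" using sdim_le_dim[OF S] by blast
      show "\<exists>i\<in>{..<d}. sdim (v i) (S i) < v i"
        using j sdim_le_dim[OF S[OF j(1)]] sdim_eq_dim_iff[OF S[OF j(1)]] by force
    qed simp
    then show ?thesis using 2 by simp
  qed
qed

end

lemma theta_stable_imp_semistable:
  "theta_stable d n v u e A f B \<Longrightarrow> theta_semistable d n v u e A f B"
  unfolding theta_stable_def theta_semistable_def by (meson less_imp_le)

theorem lemma7p2:
  fixes d n u :: nat and v :: "nat \<Rightarrow> nat"
    and e :: "complex mat" and A f :: "nat \<Rightarrow> complex mat"
    and B :: "nat \<Rightarrow> nat \<Rightarrow> complex mat"
  assumes "d \<ge> 1" and "n \<ge> 1" and "u > d"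
    and "u > v 0" and "\<forall>i. i + 1 < d \<longrightarrow> v i > v (i + 1)" and "v (d - 1) > 0"
    and "is_rep_F d n v u e A f B"
  shows "(theta_semistable d n v u e A f B \<longleftrightarrow> theta_stable d n v u e A f B) \<and>
         (theta_semistable d n v u e A f B \<longleftrightarrow>
            inj_on (\<lambda>x. e *\<^sub>v x) (carrier_vec (v 0)) \<and>
            (\<forall>p\<in>{1..d-1}. inj_on (\<lambda>x. A p *\<^sub>v x) (carrier_vec (v p))))"
proof -
  interpret rep_F d n v u e A f B using assms(7) by unfold_locales
  have "0 < d" using assms(1) by simp
  have "theta_semistable d n v u e A f B \<Longrightarrow> \<forall>i<d. path_kernel i = {0\<^sub>v (v i)}"
    using semistable_imp_path_kernel_trivial by blast
  then show ?thesis
    using path_kernel_trivial_imp_stable theta_stable_imp_semistable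
      injective_iff_path_kernel_trivial[OF \<open>0 < d\<close>] by blast
qed

end
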